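(* Let $r_0,r_1,r_2\ge 1$ with $r_1<r_0$ and $r_1<r_2$, and let $L=\mathfrak{g}(r_0,r_1,r_2)$. Then $b(L)\le r_1(r_0-r_1)+r_1r_2=r_1(r_0+r_2-r_1)$.
   Context: All Lie algebras are over an algebraically closed field $\mathbf{k}$ of characteristic zero. $\mathcal{P}(r_0,r_1,r_2)$ is the poset on $\{b_1,\dots,b_{r_0},m_1,\dots,m_{r_1},t_1,\dots,t_{r_2}\}$ whose strict relations are exactly $b_i\prec m_j$, $m_j\prec t_k$ and $b_i\prec t_k$ for all $i,j,k$. $\mathfrak{g}(r_0,r_1,r_2)$ denotes the nilpotent Lie poset algebra $\mathfrak{g}^{\prec}(\mathcal{P}(r_0,r_1,r_2))$: the Lie algebra under the commutator bracket spanned by matrix units $E_{p,q}$ with $p\prec q$. The breadth of a Lie algebra $L$ is $b(L)=\max_{x\in L}\operatorname{rank}(\mathrm{ad}_x)$, where $\mathrm{ad}_x=[x,-]$. *)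

theory Defs
  imports Main "HOL-Library.Function_Algebras" "HOL-Computational_Algebra.Polynomial"
begin

text \<open>Elements of the poset P(r0,r1,r2): b_i, m_j, t_k.\<close>
datatype pelt = Bt nat | Md nat | Tp nat

definition pcarrier :: "nat \<Rightarrow> nat \<Rightarrow> nat \<Rightarrow> pelt set" where
  "pcarrier r0 r1 r2 = Bt ` {1..r0} \<union> Md ` {1..r1} \<union> Tp ` {1..r2}"

definition pless :: "nat \<Rightarrow> nat \<Rightarrow> nat \<Rightarrow> pelt \<Rightarrow> pelt \<Rightarrow> bool" where
  "pless r0 r1 r2 p q \<longleftrightarrow> p \<in> pcarrier r0 r1 r2 \<and> q \<in> pcarrier r0 r1 r2 \<and>
     (case (p, q) of (Bt _, Md _) \<Rightarrow> True | (Md _, Tp _) \<Rightarrow> True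
                   | (Bt _, Tp _) \<Rightarrow> True | _ \<Rightarrow> False)"

type_synonym 'a pmat = "pelt \<Rightarrow> pelt \<Rightarrow> 'a"

definition pscale :: "'a::field \<Rightarrow> 'a pmat \<Rightarrow> 'a pmat" where
  "pscale c X = (\<lambda>p q. c * X p q)"

text \<open>The nilpotent Lie poset algebra: span of the matrix units E_{p,q} with p < q,
  i.e. matrices supported on the strict relation.\<close>
definition lie_poset_alg :: "(pelt \<Rightarrow> pelt \<Rightarrow> bool) \<Rightarrow> ('a::field) pmat set" where
  "lie_poset_alg R = {X. \<forall>p q. \<not> R p q \<longrightarrow> X p q = 0}"

definition pmult :: "pelt set \<Rightarrow> ('a::field) pmat \<Rightarrow> 'a pmat \<Rightarrow> 'a pmat" where
  "pmult S X Y = (\<lambda>p q. \<Sum>r\<in>S. X p r * Y r q)"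

definition pbracket :: "pelt set \<Rightarrow> ('a::field) pmat \<Rightarrow> 'a pmat \<Rightarrow> 'a pmat" where
  "pbracket S X Y = (\<lambda>p q. pmult S X Y p q - pmult S Y X p q)"

definition g_alg :: "nat \<Rightarrow> nat \<Rightarrow> nat \<Rightarrow> ('a::field) pmat set" where
  "g_alg r0 r1 r2 = lie_poset_alg (pless r0 r1 r2)"

definition ad_rank :: "nat \<Rightarrow> nat \<Rightarrow> nat \<Rightarrow> ('a::field) pmat \<Rightarrow> nat" where
  "ad_rank r0 r1 r2 x =
     vector_space.dim pscale (pbracket (pcarrier r0 r1 r2) x ` g_alg r0 r1 r2)"

definition breadth :: "nat \<Rightarrow> nat \<Rightarrow> nat \<Rightarrow> ('a::field) itself \<Rightarrow> nat" where
  "breadth r0 r1 r2 (_ :: 'a itself) =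
     Max ((\<lambda>x::'a pmat. ad_rank r0 r1 r2 x) ` g_alg r0 r1 r2)"

definition alg_closed :: "('a::field) itself \<Rightarrow> bool" where
  "alg_closed (_ :: 'a itself) \<longleftrightarrow>
     (\<forall>p :: 'a poly. degree p > 0 \<longrightarrow> (\<exists>z. poly p z = 0))"

lemma pscale_vector_space: "vector_space (pscale :: 'a::field \<Rightarrow> 'a pmat \<Rightarrow> 'a pmat)"
  by unfold_locales (auto simp: pscale_def fun_eq_iff algebra_simps)

end

theory Submission
  imports Defs
begin

text \<open>For \<open>x, y \<in> L\<close> every product \<open>x y\<close> factors through the middle layer, so
  \<open>[x, y] = \<Sum>\<^sub>j c\<^sub>j(x) \<otimes> r\<^sub>j(y) - c\<^sub>j(y) \<otimes> r\<^sub>j(x)\<close>, where \<open>c\<^sub>j\<close> and \<open>r\<^sub>j\<close> are the column and the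
  row of \<open>m\<^sub>j\<close>. Hence \<open>ad\<^sub>x(L) \<subseteq> U \<otimes> T + B \<otimes> R\<close> with \<open>U\<close> the span of the columns of \<open>x\<close>,
  \<open>R\<close> the span of its rows, \<open>B\<close> spanned by the \<open>b\<^sub>i\<close> and \<open>T\<close> by the \<open>t\<^sub>k\<close>. Extending a basis of
  \<open>U\<close> (of size \<open>s \<le> r\<^sub>1\<close>) to one of \<open>B\<close> by \<open>r\<^sub>0 - s\<close> vectors \<open>E\<close> gives
  \<open>U \<otimes> T + B \<otimes> R = U \<otimes> T + E \<otimes> R\<close>, of dimension at most \<open>s r\<^sub>2 + (r\<^sub>0 - s) r\<^sub>1\<close>, which is
  maximal at \<open>s = r\<^sub>1\<close> because \<open>r\<^sub>1 \<le> r\<^sub>2\<close>.\<close>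

definition vscale :: "'a::field \<Rightarrow> (pelt \<Rightarrow> 'a) \<Rightarrow> (pelt \<Rightarrow> 'a)" where
  "vscale c v = (\<lambda>p. c * v p)"

lemma vscale_vector_space: "vector_space (vscale :: 'a::field \<Rightarrow> (pelt \<Rightarrow> 'a) \<Rightarrow> _)"
  by unfold_locales (auto simp: vscale_def fun_eq_iff algebra_simps)

interpretation V: vector_space "vscale :: 'a::field \<Rightarrow> (pelt \<Rightarrow> 'a) \<Rightarrow> _"
  by (rule vscale_vector_space)

interpretation M: vector_space "pscale :: 'a::field \<Rightarrow> 'a pmat \<Rightarrow> _"
  by (rule pscale_vector_space)

lemma sum_fun_apply: "(sum f A) x = (\<Sum>a\<in>A. f a x)"
  by (induction A rule: infinite_finite_induct) auto

definition outer :: "(pelt \<Rightarrow> 'a::field) \<Rightarrow> (pelt \<Rightarrow> 'a) \<Rightarrow> 'a pmat" where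
  "outer u w = (\<lambda>p q. u p * w q)"

definition outer_products :: "(pelt \<Rightarrow> 'a::field) set \<Rightarrow> (pelt \<Rightarrow> 'a) set \<Rightarrow> 'a pmat set" where
  "outer_products A B = (\<lambda>(a, b). outer a b) ` (A \<times> B)"

lemma outer_add_left: "outer (a + b) w = outer a w + outer b w"
  by (simp add: outer_def fun_eq_iff algebra_simps)

lemma module_hom_outer_left: "module_hom vscale pscale (\<lambda>u. outer u (w::pelt \<Rightarrow> 'a::field))"
  unfolding module_hom_def module_hom_axioms_def
  using V.module_axioms M.module_axioms
  by (auto simp: outer_def vscale_def pscale_def fun_eq_iff algebra_simps)

lemma module_hom_outer_right: "module_hom vscale pscale (\<lambda>w. outer (u::pelt \<Rightarrow> 'a::field) w)"
  unfolding module_hom_def module_hom_axioms_def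
  using V.module_axioms M.module_axioms
  by (auto simp: outer_def vscale_def pscale_def fun_eq_iff algebra_simps)

lemma card_outer_products_le:
  assumes "finite A" "finite B"
  shows "card (outer_products A B) \<le> card A * card B"
  unfolding outer_products_def
  using card_image_le[of "A \<times> B"] assms by (simp add: card_cartesian_product)

lemma outer_in_span_outer_products:
  assumes "u \<in> V.span A" "w \<in> V.span B"
  shows "outer u w \<in> M.span (outer_products A B)"
proof -
  have "outer a w \<in> M.span (outer_products A B)" if "a \<in> A" for a
  proof -
    have "outer a w \<in> M.span (outer a ` B)"
      using module_hom.span_image[OF module_hom_outer_right, of a B] assms(2) by blast
    moreover have "outer a ` B \<subseteq> outer_products A B"
      using that by (auto simp: outer_products_def)
    ultimately show ?thesis using M.span_mono by blast
  qed
  then have "M.span ((\<lambda>a. outer a w) ` A) \<subseteq> M.span (outer_products A B)"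
    by (intro M.span_minimal M.subspace_span) blast
  moreover have "outer u w \<in> M.span ((\<lambda>a. outer a w) ` A)"
    using module_hom.span_image[OF module_hom_outer_left, of w A] assms(1) by blast
  ultimately show ?thesis by blast
qed

lemma outer_products_subset_span:
  assumes "C \<subseteq> V.span S" "B \<subseteq> V.span (S \<union> E)" "R \<subseteq> V.span T"
  shows "outer_products C T \<union> outer_products B R
    \<subseteq> M.span (outer_products S T \<union> outer_products E R)" (is "_ \<subseteq> M.span ?G")
proof -
  have ST: "M.span (outer_products S T) \<subseteq> M.span ?G"
    by (rule M.span_mono) simp
  have "outer c t \<in> M.span ?G" if "c \<in> C" "t \<in> T" for c t
  proof -
    have "outer c t \<in> M.span (outer_products S T)"
      by (intro outer_in_span_outer_products) (use assms(1) that in \<open>auto intro: V.span_base\<close>)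
    with ST show ?thesis by blast
  qed
  moreover have "outer b r \<in> M.span ?G" if b: "b \<in> B" and r: "r \<in> R" for b r
  proof -
    obtain a e where ae: "b = a + e" "a \<in> V.span S" "e \<in> V.span E"
      using assms(2) b unfolding V.span_Un by blast
    have "outer a r \<in> M.span ?G"
      using outer_in_span_outer_products[OF ae(2)] assms(3) r ST by blast
    moreover have "outer e r \<in> M.span ?G"
      using outer_in_span_outer_products[OF ae(3) V.span_base[OF r]]
        M.span_mono[of "outer_products E R" ?G] by blast
    ultimately show ?thesis by (simp add: ae(1) outer_add_left M.span_add)
  qed
  ultimately show ?thesis by (auto simp: outer_products_def)
qed

text \<open>Here \<open>s\<close> is the dimension of \<open>span C\<close>.\<close>

lemma dim_outer_products_le:
  fixes C B T R :: "(pelt \<Rightarrow> 'a::field) set"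
  assumes "finite C" "finite B" "finite T" "finite R"
    and "C \<subseteq> V.span B" "R \<subseteq> V.span T"
    and "A \<subseteq> M.span (outer_products C T \<union> outer_products B R)"
  obtains s where "s \<le> card C" and "M.dim A \<le> s * card T + (card B - s) * card R"
proof -
  obtain S where S: "S \<subseteq> C" "V.independent S" "C \<subseteq> V.span S"
    using V.maximal_independent_subset by blast
  obtain S' where S': "S \<subseteq> S'" "S' \<subseteq> S \<union> B" "V.independent S'" "S \<union> B \<subseteq> V.span S'"
    using V.maximal_independent_subset_extend[of S "S \<union> B"] S(2) by blast
  define E where "E = S' - S"
  have "S' \<subseteq> V.span B"
    using S'(2) S(1) assms(5) V.span_superset by blast
  then have S'_bound: "finite S' \<and> card S' \<le> card B"
    using V.independent_span_bound[OF assms(2) S'(3)] by blast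
  have finS: "finite S" using S(1) assms(1) finite_subset by blast
  have finE: "finite E" using S'_bound by (simp add: E_def)
  have cardE: "card E = card S' - card S"
    unfolding E_def using S'(1) finS by (simp add: card_Diff_subset)
  define G where "G = outer_products S T \<union> outer_products E R"
  have "B \<subseteq> V.span (S \<union> E)"
    using S'(1,4) by (auto simp: E_def Un_absorb1)
  then have "outer_products C T \<union> outer_products B R \<subseteq> M.span G"
    unfolding G_def by (rule outer_products_subset_span[OF S(3) _ assms(6)])
  then have "A \<subseteq> M.span G"
    using assms(7) M.span_minimal[OF _ M.subspace_span] by blast
  then have "M.dim A \<le> card G"
    by (rule M.dim_le_card) (simp add: G_def outer_products_def finS finE assms(3,4))
  also have "\<dots> \<le> card S * card T + card E * card R"
    using card_Un_le[of "outer_products S T" "outer_products E R"]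
      card_outer_products_le[OF finS assms(3)] card_outer_products_le[OF finE assms(4)]
    by (simp add: G_def)
  also have "\<dots> \<le> card S * card T + (card B - card S) * card R"
    using S'_bound cardE by (simp add: diff_le_mono)
  finally show thesis
    using that card_mono[OF assms(1) S(1)] by blast
qed

lemma count_bound:
  fixes s r0 r1 r2 :: nat
  assumes "s \<le> r1" "r1 \<le> r0" "r1 \<le> r2"
  shows "s * r2 + (r0 - s) * r1 \<le> r1 * (r0 - r1) + r1 * r2"
proof -
  have "0 \<le> (int r1 - int s) * (int r2 - int r1)"
    using assms by simp
  then have "int s * int r2 + (int r0 - int s) * int r1
      \<le> int r1 * (int r0 - int r1) + int r1 * int r2"
    by (simp add: algebra_simps)
  then have "int (s * r2 + (r0 - s) * r1) \<le> int (r1 * (r0 - r1) + r1 * r2)"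
    using assms by (simp add: of_nat_diff)
  then show ?thesis
    by linarith
qed

definition unit_vector :: "pelt \<Rightarrow> pelt \<Rightarrow> 'a::field" where
  "unit_vector q = (\<lambda>p. if p = q then 1 else 0)"

definition mid_column :: "'a::field pmat \<Rightarrow> nat \<Rightarrow> pelt \<Rightarrow> 'a" where
  "mid_column z j = (\<lambda>p. z p (Md j))"

definition mid_row :: "'a::field pmat \<Rightarrow> nat \<Rightarrow> pelt \<Rightarrow> 'a" where
  "mid_row z j = (\<lambda>q. z (Md j) q)"

lemma in_span_unit_vectors:
  fixes v :: "pelt \<Rightarrow> 'a::field"
  assumes "finite P" "\<And>p. v p \<noteq> 0 \<Longrightarrow> p \<in> P"
  shows "v \<in> V.span (unit_vector ` P)"
proof -
  have "v = (\<Sum>q\<in>P. vscale (v q) (unit_vector q))"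
  proof
    fix p
    have "(\<Sum>q\<in>P. vscale (v q) (unit_vector q)) p = (\<Sum>q\<in>P. if q = p then v p else 0)"
      unfolding sum_fun_apply by (intro sum.cong) (auto simp: vscale_def unit_vector_def)
    also have "\<dots> = v p"
      using assms by auto
    finally show "v p = (\<Sum>q\<in>P. vscale (v q) (unit_vector q)) p" ..
  qed
  also have "\<dots> \<in> V.span (unit_vector ` P)"
    by (intro V.span_sum V.span_scale V.span_base) auto
  finally show ?thesis .
qed

lemma g_alg_support:
  assumes "x \<in> g_alg r0 r1 r2" "x p q \<noteq> 0"
  shows "pless r0 r1 r2 p q"
  using assms unfolding g_alg_def lie_poset_alg_def by auto

lemma mid_column_in_span:
  assumes "x \<in> g_alg r0 r1 r2"
  shows "mid_column x j \<in> V.span (unit_vector ` Bt ` {1..r0})"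
proof (rule in_span_unit_vectors)
  fix p assume "mid_column x j p \<noteq> 0"
  then have "pless r0 r1 r2 p (Md j)"
    using g_alg_support[OF assms] by (simp add: mid_column_def)
  then show "p \<in> Bt ` {1..r0}"
    by (cases p) (auto simp: mid_column_def pless_def pcarrier_def)
qed simp

lemma mid_row_in_span:
  assumes "x \<in> g_alg r0 r1 r2"
  shows "mid_row x j \<in> V.span (unit_vector ` Tp ` {1..r2})"
proof (rule in_span_unit_vectors)
  fix q assume "mid_row x j q \<noteq> 0"
  then have "pless r0 r1 r2 (Md j) q"
    using g_alg_support[OF assms] by (simp add: mid_row_def)
  then show "q \<in> Tp ` {1..r2}"
    by (cases q) (auto simp: mid_row_def pless_def pcarrier_def)
qed simp

lemma pmult_g_alg:
  assumes "x \<in> g_alg r0 r1 r2" "y \<in> g_alg r0 r1 r2"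
  shows "pmult (pcarrier r0 r1 r2) x y p q = (\<Sum>j\<in>{1..r1}. x p (Md j) * y (Md j) q)"
proof -
  have vanish: "x p r * y r q = 0" if "r \<in> pcarrier r0 r1 r2 - Md ` {1..r1}" for r
  proof (cases r)
    case (Bt i)
    then have "x p r = 0"
      using g_alg_support[OF assms(1), of p r] by (cases p) (auto simp: pless_def)
    then show ?thesis by simp
  next
    case (Md j)
    then show ?thesis using that by (auto simp: pcarrier_def)
  next
    case (Tp k)
    then have "y r q = 0"
      using g_alg_support[OF assms(2), of r q] by (cases q) (auto simp: pless_def)
    then show ?thesis by simp
  qed
  have "pmult (pcarrier r0 r1 r2) x y p q = (\<Sum>r\<in>Md ` {1..r1}. x p r * y r q)"
    unfolding pmult_def
    by (rule sum.mono_neutral_right) (use vanish in \<open>auto simp: pcarrier_def\<close>)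
  also have "\<dots> = (\<Sum>j\<in>{1..r1}. x p (Md j) * y (Md j) q)"
    by (subst sum.reindex) (auto simp: inj_on_def)
  finally show ?thesis .
qed

lemma pbracket_g_alg:
  assumes "x \<in> g_alg r0 r1 r2" "y \<in> g_alg r0 r1 r2"
  shows "pbracket (pcarrier r0 r1 r2) x y =
    (\<Sum>j\<in>{1..r1}. outer (mid_column x j) (mid_row y j) - outer (mid_column y j) (mid_row x j))"
  by (auto simp: fun_eq_iff pbracket_def pmult_g_alg[OF assms] pmult_g_alg[OF assms(2,1)]
      sum_fun_apply outer_def mid_column_def mid_row_def sum_subtractf)

lemma ad_image_subset_span:
  fixes x :: "'a::field pmat"
  assumes x: "x \<in> g_alg r0 r1 r2"
  shows "pbracket (pcarrier r0 r1 r2) x ` g_alg r0 r1 r2 \<subseteq>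
    M.span (outer_products (mid_column x ` {1..r1}) (unit_vector ` Tp ` {1..r2})
          \<union> outer_products (unit_vector ` Bt ` {1..r0}) (mid_row x ` {1..r1}))"
    (is "_ \<subseteq> M.span (outer_products ?C ?T \<union> outer_products ?B ?R)")
proof clarify
  fix y :: "'a pmat" assume y: "y \<in> g_alg r0 r1 r2"
  have "outer (mid_column x j) (mid_row y j) \<in> M.span (outer_products ?C ?T)"
    if "j \<in> {1..r1}" for j
    using outer_in_span_outer_products[OF V.span_base mid_row_in_span[OF y]] that by blast
  moreover have "outer (mid_column y j) (mid_row x j) \<in> M.span (outer_products ?B ?R)"
    if "j \<in> {1..r1}" for j
    using outer_in_span_outer_products[OF mid_column_in_span[OF y] V.span_base] that by blast
  ultimately show "pbracket (pcarrier r0 r1 r2) x y \<in> M.span (outer_products ?C ?T \<union> outer_products ?B ?R)"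
    unfolding pbracket_g_alg[OF x y]
    by (intro M.span_sum M.span_diff) (auto intro: subsetD[OF M.span_mono, rotated])
qed

lemma ad_rank_le:
  fixes x :: "'a::field pmat"
  assumes x: "x \<in> g_alg r0 r1 r2" and "r1 \<le> r0" "r1 \<le> r2"
  shows "ad_rank r0 r1 r2 x \<le> r1 * (r0 - r1) + r1 * r2"
proof -
  let ?C = "mid_column x ` {1..r1}" and ?R = "mid_row x ` {1..r1}"
  let ?B = "unit_vector ` Bt ` {1..r0} :: (pelt \<Rightarrow> 'a) set"
  let ?T = "unit_vector ` Tp ` {1..r2} :: (pelt \<Rightarrow> 'a) set"
  have cards: "card ?C \<le> r1" "card ?R \<le> r1" "card ?B \<le> r0" "card ?T \<le> r2"
    by (auto intro: card_image_le[THEN order_trans] simp: card_image inj_on_def)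
  obtain s where s: "s \<le> card ?C"
    and dim: "ad_rank r0 r1 r2 x \<le> s * card ?T + (card ?B - s) * card ?R"
    unfolding ad_rank_def
    by (rule dim_outer_products_le[OF _ _ _ _ _ _ ad_image_subset_span[OF x]])
      (use mid_column_in_span[OF x] mid_row_in_span[OF x] in auto)
  note dim
  also have "s * card ?T + (card ?B - s) * card ?R \<le> s * r2 + (r0 - s) * r1"
    using cards by (intro add_mono mult_le_mono diff_le_mono) auto
  also have "\<dots> \<le> r1 * (r0 - r1) + r1 * r2"
    using s cards assms(2,3) by (intro count_bound) auto
  finally show ?thesis .
qed

theorem theorem4:
  fixes r0 r1 r2 :: nat
  assumes "alg_closed TYPE('a::field_char_0)"
    and "r0 \<ge> 1" and "r1 \<ge> 1" and "r2 \<ge> 1"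
    and "r1 < r0" and "r1 < r2"
  shows "breadth r0 r1 r2 TYPE('a) \<le> r1 * (r0 - r1) + r1 * r2
       \<and> r1 * (r0 - r1) + r1 * r2 = r1 * (r0 + r2 - r1)"
proof
  let ?N = "r1 * (r0 - r1) + r1 * r2"
  let ?ranks = "(\<lambda>x::'a pmat. ad_rank r0 r1 r2 x) ` g_alg r0 r1 r2"
  have bounded: "\<forall>k\<in>?ranks. k \<le> ?N"
    using ad_rank_le assms(5,6) by fastforce
  then have "finite ?ranks"
    by (meson finite_atMost finite_subset atMost_iff subsetI)
  moreover have "?ranks \<noteq> {}"
    by (auto simp: g_alg_def lie_poset_alg_def)
  ultimately show "breadth r0 r1 r2 TYPE('a) \<le> ?N"
    unfolding breadth_def using bounded by simp
  show "?N = r1 * (r0 + r2 - r1)"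
    using assms(5) by (simp add: diff_mult_distrib2 add_mult_distrib2)
qed

end
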